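(* Let $\Delta\vdash t$ be a closed nominal term-in-context and $\sigma$ a nominal substitution satisfying $\Delta$ with domain contained in the variables of $t$ and $t\sigma$ ground. Let $\pi_i\cdot X$ and $\pi_j\cdot X$ be two occurrences of the same variable $X$ in $t$, and let $[X\mapsto\underline{\lambda}(\overline{xs}_i).s_i]$ and $[X\mapsto\underline{\lambda}(\overline{xs}_j).s_j]$ be the substitutes obtained by the substitution translation using $\pi_i$, respectively $\pi_j$, in place of the permutation of the leftmost occurrence. Then $\underline{\lambda}(\overline{xs}_i).s_i$ and $\underline{\lambda}(\overline{xs}_j).s_j$ are $\alpha$-equivalent.
   Context: Nominal terms: $s,t ::= a \mid \pi\cdot X \mid [a]s \mid f\,s \mid (s_1,\ldots,s_n)$ over atoms, variables, function symbols and finite-support permutations $\pi$ of atoms acting on terms in the usual nominal way. A freshness context $\Delta$ is a set of constraints $a\#X$; $\sigma$ satisfies $\Delta$ if $\vdash a\#X\sigma$ for all $a\#X\in\Delta$ (standard nominal freshness). Substitutions map variables to terms, applied without avoiding capture. $\Delta\vdash t$ is closed if: (1) every atom occurrence $a$ in $t$ lies under an abstraction $[a]$; (2) if $\pi\cdot X$ is in the scope of an abstraction of $\pi(a)$ then every occurrence $\pi'\cdot X$ of $X$ in $t$ is in the scope of an abstraction of $\pi'(a)$, or $a\#X\in\Delta$; (3) for two occurrences $\pi_1\cdot X,\pi_2\cdot X$ and $a$ with $\pi_1(a)\neq\pi_2(a)$, if $a$ is not abstracted in one of the occurrences then $a\#X\in\Delta$. Translation: $\Lambda_t(X)$ is the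 set of atoms $a$ such that some occurrence of $X$ in $t$ is in the scope of $[a]$. Fix a total order on atoms. $\mathcal{T}(\Delta,u)$ maps a nominal term $u$ to a CRS meta-term by keeping atoms, abstractions, function applications and tuples and replacing each $\pi\cdot Y$ by $Y(\pi\cdot ys)$ with $ys$ the ascending list of $\{\pi^{-1}(a)\mid a\in\Lambda_u(Y)\}\setminus\{a\mid a\#Y\in\Delta\}$. For a permutation $\rho$ of an occurrence $\rho\cdot X$ of $X$ in $t$, the substitute translating $\sigma(X)$ with respect to $\rho$ is $\underline{\lambda}(\rho\cdot xs).\mathcal{T}(\Delta,\rho\cdot\sigma(X))$, where $xs$ is the ascending list of $\{\rho^{-1}(a)\mid a\in\Lambda_t(X)\}\setminus\{a\mid a\#X\in\Delta\}$ and $\rho$ is applied elementwise. A CRS substitute $\underline{\lambda}(a_1,\dots,a_n).s$ binds $a_1,\dots,a_n$ in $s$; $\alpha$-equivalence means equality up to renaming of these and other bound variables. *)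

theory Defs
  imports "HOL-Combinatorics.Perm"
begin

datatype ('a, 'v, 'f) nterm =
    Atom 'a
  | Susp "'a perm" 'v
  | Abs 'a "('a, 'v, 'f) nterm"
  | App 'f "('a, 'v, 'f) nterm"
  | Tup "('a, 'v, 'f) nterm list"

fun perm_act :: "'a perm \<Rightarrow> ('a, 'v, 'f) nterm \<Rightarrow> ('a, 'v, 'f) nterm" where
  "perm_act p (Atom a) = Atom (Perm.apply p a)"
| "perm_act p (Susp q X) = Susp (p * q) X"
| "perm_act p (Abs a s) = Abs (Perm.apply p a) (perm_act p s)"
| "perm_act p (App f s) = App f (perm_act p s)"
| "perm_act p (Tup ts) = Tup (map (perm_act p) ts)"

text \<open>Substitutions: partial maps from variables to terms, applied without avoiding capture.\<close>
type_synonym ('a, 'v, 'f) nsubst = "'v \<Rightarrow> ('a, 'v, 'f) nterm option"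

fun subst :: "('a, 'v, 'f) nsubst \<Rightarrow> ('a, 'v, 'f) nterm \<Rightarrow> ('a, 'v, 'f) nterm" where
  "subst \<sigma> (Atom a) = Atom a"
| "subst \<sigma> (Susp p X) = (case \<sigma> X of None \<Rightarrow> Susp p X | Some u \<Rightarrow> perm_act p u)"
| "subst \<sigma> (Abs a s) = Abs a (subst \<sigma> s)"
| "subst \<sigma> (App f s) = App f (subst \<sigma> s)"
| "subst \<sigma> (Tup ts) = Tup (map (subst \<sigma>) ts)"

fun vars :: "('a, 'v, 'f) nterm \<Rightarrow> 'v set" where
  "vars (Atom a) = {}"
| "vars (Susp p X) = {X}"
| "vars (Abs a s) = vars s"
| "vars (App f s) = vars s"
| "vars (Tup ts) = \<Union> (set (map vars ts))"

definition ground :: "('a, 'v, 'f) nterm \<Rightarrow> bool" where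
  "ground t \<longleftrightarrow> vars t = {}"

type_synonym ('a, 'v) fctx = "('a \<times> 'v) set"

fun fresh :: "('a, 'v) fctx \<Rightarrow> 'a \<Rightarrow> ('a, 'v, 'f) nterm \<Rightarrow> bool" where
  "fresh \<Delta> a (Atom b) \<longleftrightarrow> a \<noteq> b"
| "fresh \<Delta> a (Susp p X) \<longleftrightarrow> (Perm.apply (inverse p) a, X) \<in> \<Delta>"
| "fresh \<Delta> a (Abs b s) \<longleftrightarrow> a = b \<or> fresh \<Delta> a s"
| "fresh \<Delta> a (App f s) \<longleftrightarrow> fresh \<Delta> a s"
| "fresh \<Delta> a (Tup ts) \<longleftrightarrow> list_all (fresh \<Delta> a) ts"

definition satisfies :: "('a, 'v, 'f) nsubst \<Rightarrow> ('a, 'v) fctx \<Rightarrow> bool" where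
  "satisfies \<sigma> \<Delta> \<longleftrightarrow> (\<forall>(a, X) \<in> \<Delta>. fresh {} a (subst \<sigma> (Susp 1 X)))"

text \<open>Variable occurrences of a term: triples (B, pi, X), one for each occurrence pi . X,
  where B is the set of atoms abstracted above that occurrence (its abstraction scopes).\<close>
fun occs_in :: "'a set \<Rightarrow> ('a, 'v, 'f) nterm \<Rightarrow> ('a set \<times> 'a perm \<times> 'v) set" where
  "occs_in B (Atom a) = {}"
| "occs_in B (Susp p X) = {(B, p, X)}"
| "occs_in B (Abs a s) = occs_in (insert a B) s"
| "occs_in B (App f s) = occs_in B s"
| "occs_in B (Tup ts) = \<Union> (set (map (occs_in B) ts))"

definition occs :: "('a, 'v, 'f) nterm \<Rightarrow> ('a set \<times> 'a perm \<times> 'v) set" where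
  "occs t = occs_in {} t"

text \<open>Atom occurrences (B, a): occurrences of the atom term a, with B the abstracted atoms above.\<close>
fun atom_occs_in :: "'a set \<Rightarrow> ('a, 'v, 'f) nterm \<Rightarrow> ('a set \<times> 'a) set" where
  "atom_occs_in B (Atom a) = {(B, a)}"
| "atom_occs_in B (Susp p X) = {}"
| "atom_occs_in B (Abs a s) = atom_occs_in (insert a B) s"
| "atom_occs_in B (App f s) = atom_occs_in B s"
| "atom_occs_in B (Tup ts) = \<Union> (set (map (atom_occs_in B) ts))"

definition atom_occs :: "('a, 'v, 'f) nterm \<Rightarrow> ('a set \<times> 'a) set" where
  "atom_occs t = atom_occs_in {} t"

definition closed :: "('a, 'v) fctx \<Rightarrow> ('a, 'v, 'f) nterm \<Rightarrow> bool" where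
  "closed \<Delta> t \<longleftrightarrow>
     (\<forall>(B, a) \<in> atom_occs t. a \<in> B) \<and>
     (\<forall>(B, p, X) \<in> occs t. \<forall>a. Perm.apply p a \<in> B \<longrightarrow>
        (\<forall>(B', p', X') \<in> occs t. X' = X \<longrightarrow> Perm.apply p' a \<in> B') \<or> (a, X) \<in> \<Delta>) \<and>
     (\<forall>(B1, p1, X1) \<in> occs t. \<forall>(B2, p2, X2) \<in> occs t. \<forall>a.
        X1 = X2 \<and> Perm.apply p1 a \<noteq> Perm.apply p2 a \<and>
        (Perm.apply p1 a \<notin> B1 \<or> Perm.apply p2 a \<notin> B2) \<longrightarrow> (a, X1) \<in> \<Delta>)"

definition Lam :: "('a, 'v, 'f) nterm \<Rightarrow> 'v \<Rightarrow> 'a set" where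
  "Lam t X = {a. \<exists>B p. (B, p, X) \<in> occs t \<and> a \<in> B}"

datatype ('a, 'v, 'f) crs =
    CAtom 'a
  | CAbs 'a "('a, 'v, 'f) crs"
  | CApp 'f "('a, 'v, 'f) crs"
  | CTup "('a, 'v, 'f) crs list"
  | CMVar 'v "'a list"

definition arg_atoms :: "('a::linorder, 'v) fctx \<Rightarrow> 'a set \<Rightarrow> 'a perm \<Rightarrow> 'v \<Rightarrow> 'a list" where
  "arg_atoms \<Delta> L p Y = sorted_list_of_set ((Perm.apply (inverse p) ` L) - {a. (a, Y) \<in> \<Delta>})"

fun trans_aux :: "('a::linorder, 'v) fctx \<Rightarrow> ('v \<Rightarrow> 'a set) \<Rightarrow> ('a, 'v, 'f) nterm \<Rightarrow> ('a, 'v, 'f) crs" where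
  "trans_aux \<Delta> L (Atom a) = CAtom a"
| "trans_aux \<Delta> L (Susp p Y) = CMVar Y (map (Perm.apply p) (arg_atoms \<Delta> (L Y) p Y))"
| "trans_aux \<Delta> L (Abs a s) = CAbs a (trans_aux \<Delta> L s)"
| "trans_aux \<Delta> L (App f s) = CApp f (trans_aux \<Delta> L s)"
| "trans_aux \<Delta> L (Tup ts) = CTup (map (trans_aux \<Delta> L) ts)"

definition trans :: "('a::linorder, 'v) fctx \<Rightarrow> ('a, 'v, 'f) nterm \<Rightarrow> ('a, 'v, 'f) crs" where
  "trans \<Delta> u = trans_aux \<Delta> (Lam u) u"

text \<open>A CRS substitute lambda(a1,...,an).s is represented as the pair ([a1,...,an], s).\<close>
type_synonym ('a, 'v, 'f) substitute = "'a list \<times> ('a, 'v, 'f) crs"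

text \<open>The substitute translating sigma(X) with respect to the permutation rho of an occurrence
  rho . X of X in t:  lambda(rho . xs). T(Delta, rho . sigma(X)).\<close>
definition subst_trans ::
  "('a::linorder, 'v) fctx \<Rightarrow> ('a, 'v, 'f) nterm \<Rightarrow> ('a, 'v, 'f) nsubst \<Rightarrow> 'v \<Rightarrow> 'a perm
     \<Rightarrow> ('a, 'v, 'f) substitute" where
  "subst_trans \<Delta> t \<sigma> X \<rho> =
     (map (Perm.apply \<rho>) (arg_atoms \<Delta> (Lam t X) \<rho> X),
      trans \<Delta> (perm_act \<rho> (the (\<sigma> X))))"

text \<open>Bound atoms are tracked by an environment of pairs of corresponding binders,
  innermost first.\<close>
fun bvar_eq :: "('a \<times> 'a) list \<Rightarrow> 'a \<Rightarrow> 'a \<Rightarrow> bool" where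
  "bvar_eq [] a b \<longleftrightarrow> a = b"
| "bvar_eq ((x, y) # env) a b \<longleftrightarrow>
     (if a = x \<or> b = y then a = x \<and> b = y else bvar_eq env a b)"

fun alpha :: "('a \<times> 'a) list \<Rightarrow> ('a, 'v, 'f) crs \<Rightarrow> ('a, 'v, 'f) crs \<Rightarrow> bool"
and alpha_list :: "('a \<times> 'a) list \<Rightarrow> ('a, 'v, 'f) crs list \<Rightarrow> ('a, 'v, 'f) crs list \<Rightarrow> bool" where
  "alpha env (CAtom a) (CAtom b) \<longleftrightarrow> bvar_eq env a b"
| "alpha env (CAbs a s) (CAbs b u) \<longleftrightarrow> alpha ((a, b) # env) s u"
| "alpha env (CApp f s) (CApp g u) \<longleftrightarrow> f = g \<and> alpha env s u"
| "alpha env (CTup ss) (CTup us) \<longleftrightarrow> alpha_list env ss us"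
| "alpha env (CMVar X as) (CMVar Y bs) \<longleftrightarrow> X = Y \<and> list_all2 (bvar_eq env) as bs"
| "alpha env _ _ \<longleftrightarrow> False"
| "alpha_list env [] [] \<longleftrightarrow> True"
| "alpha_list env (s # ss) (u # us) \<longleftrightarrow> alpha env s u \<and> alpha_list env ss us"
| "alpha_list env _ _ \<longleftrightarrow> False"

text \<open>lambda(a1..an).s and lambda(b1..bm).u are alpha-equivalent: n = m and the bodies are
  alpha-equivalent with a_i corresponding to b_i (later binders shadow earlier ones).\<close>
definition alpha_substitute :: "('a, 'v, 'f) substitute \<Rightarrow> ('a, 'v, 'f) substitute \<Rightarrow> bool" where
  "alpha_substitute S1 S2 \<longleftrightarrow>
     length (fst S1) = length (fst S2) \<and> alpha (rev (zip (fst S1) (fst S2))) (snd S1) (snd S2)"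

end

theory Submission
  imports Defs
begin

text \<open>Since t\<sigma> is ground, \<sigma>(X) is a ground term u, and since \<sigma> satisfies \<Delta> no free
  atom c of u has c # X in \<Delta>. Condition (3) of closedness then forces the argument lists of
  both substitutes to be images of one list xs (under \<pi>i and \<pi>j), and every free atom c of u
  with \<pi>i(c) \<noteq> \<pi>j(c) to lie in xs. Hence the bodies \<pi>i\<cdot>u and \<pi>j\<cdot>u differ only by the
  renaming \<pi>i(c) \<mapsto> \<pi>j(c) of atoms bound by the substitute, and their translations are
  \<alpha>-equivalent.\<close>

notation Perm.apply (infixl \<open>\<langle>$\<rangle>\<close> 999)

lemma apply_inverse_apply [simp]: "inverse p \<langle>$\<rangle> (p \<langle>$\<rangle> c) = c"
  by (simp add: apply_sequence)

lemma apply_apply_inverse [simp]: "p \<langle>$\<rangle> (inverse p \<langle>$\<rangle> c) = c"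
  by (simp add: apply_sequence)

lemma mem_image_apply_inverse: "c \<in> apply (inverse p) ` A \<longleftrightarrow> p \<langle>$\<rangle> c \<in> A"
  by (metis apply_apply_inverse apply_inverse_apply image_iff)

lemma perm_act_one [simp]: "perm_act 1 s = s"
  by (induction s) (auto simp: map_idI)

lemma vars_perm_act [simp]: "vars (perm_act p s) = vars s"
  by (induction s) auto

fun fa :: "('a, 'v, 'f) nterm \<Rightarrow> 'a set" where
  "fa (Atom a) = {a}"
| "fa (Susp p X) = {}"
| "fa (Abs a s) = fa s - {a}"
| "fa (App f s) = fa s"
| "fa (Tup ts) = \<Union> (set (map fa ts))"

lemma fresh_empty_imp_notin_fa: "fresh {} a s \<Longrightarrow> a \<notin> fa s"
  by (induction s) (auto simp: list_all_iff)

lemma satisfies_notin_fa: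
  assumes "satisfies \<sigma> \<Delta>" and "\<sigma> X = Some u" and "(c, X) \<in> \<Delta>"
  shows "c \<notin> fa u"
  using assms fresh_empty_imp_notin_fa[of c u] by (auto simp: satisfies_def)

lemma occs_in_subst_None:
  "(B', p, X) \<in> occs_in B t \<Longrightarrow> \<sigma> X = None \<Longrightarrow> X \<in> vars (subst \<sigma> t)"
  by (induction t arbitrary: B) auto

lemma occs_in_subst_Some:
  "(B', p, X) \<in> occs_in B t \<Longrightarrow> \<sigma> X = Some u \<Longrightarrow> vars u \<subseteq> vars (subst \<sigma> t)"
  by (induction t arbitrary: B) auto

lemma ground_subst_occs:
  assumes "ground (subst \<sigma> t)" and "(B, p, X) \<in> occs t"
  obtains u where "\<sigma> X = Some u" and "vars u = {}"
  using assms occs_in_subst_None[of B p X "{}" t \<sigma>] occs_in_subst_Some[of B p X "{}" t \<sigma>]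
  by (cases "\<sigma> X") (auto simp: occs_def ground_def)

lemma finite_occs_in: "finite (occs_in B t)"
  by (induction t arbitrary: B) auto

lemma finite_occs_in_scope: "finite B \<Longrightarrow> (B', p, X) \<in> occs_in B t \<Longrightarrow> finite B'"
  by (induction t arbitrary: B) auto

lemma finite_Lam: "finite (Lam t X)"
proof (rule finite_subset)
  show "Lam t X \<subseteq> \<Union> (fst ` occs t)"
    unfolding Lam_def by force
  show "finite (\<Union> (fst ` occs t))"
    using finite_occs_in[of "{}" t] finite_occs_in_scope[of "{}" _ _ _ t]
    by (auto simp: occs_def)
qed

lemma scope_subset_Lam: "(B, p, X) \<in> occs t \<Longrightarrow> B \<subseteq> Lam t X"
  by (auto simp: Lam_def)

lemma set_arg_atoms_Lam:
  "set (arg_atoms \<Delta> (Lam t X) p X) = {c. p \<langle>$\<rangle> c \<in> Lam t X \<and> (c, X) \<notin> \<Delta>}"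
proof -
  have "finite (apply (inverse p) ` Lam t X - {a. (a, X) \<in> \<Delta>})"
    using finite_Lam[of t X] by simp
  then show ?thesis
    by (auto simp: arg_atoms_def mem_image_apply_inverse)
qed

lemma closed_unabstracted_diff_fresh:
  assumes "closed \<Delta> t" and "(B1, p1, X) \<in> occs t" and "(B2, p2, X) \<in> occs t"
    and "p1 \<langle>$\<rangle> a \<noteq> p2 \<langle>$\<rangle> a" and "p1 \<langle>$\<rangle> a \<notin> B1"
  shows "(a, X) \<in> \<Delta>"
proof -
  have "\<forall>(B1, p1, X1) \<in> occs t. \<forall>(B2, p2, X2) \<in> occs t. \<forall>a.
      X1 = X2 \<and> p1 \<langle>$\<rangle> a \<noteq> p2 \<langle>$\<rangle> a \<and> (p1 \<langle>$\<rangle> a \<notin> B1 \<or> p2 \<langle>$\<rangle> a \<notin> B2) \<longrightarrow> (a, X1) \<in> \<Delta>"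
    using assms(1) unfolding closed_def by (elim conjE)
  from bspec[OF this assms(2)] have "\<forall>(B2, p2, X2) \<in> occs t. \<forall>a.
      X = X2 \<and> p1 \<langle>$\<rangle> a \<noteq> p2 \<langle>$\<rangle> a \<and> (p1 \<langle>$\<rangle> a \<notin> B1 \<or> p2 \<langle>$\<rangle> a \<notin> B2) \<longrightarrow> (a, X) \<in> \<Delta>"
    by simp
  from bspec[OF this assms(3)] show ?thesis
    using assms(4,5) by simp
qed

lemma closed_arg_atoms_eq:
  assumes cl: "closed \<Delta> t" and "(B1, p1, X) \<in> occs t" and "(B2, p2, X) \<in> occs t"
  shows "arg_atoms \<Delta> (Lam t X) p1 X = arg_atoms \<Delta> (Lam t X) p2 X"
proof -
  have "p2 \<langle>$\<rangle> c \<in> Lam t X"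
    if "(B1, p1, X) \<in> occs t" "(B2, p2, X) \<in> occs t" "p1 \<langle>$\<rangle> c \<in> Lam t X" "(c, X) \<notin> \<Delta>"
    for B1 p1 B2 p2 c
    using that closed_unabstracted_diff_fresh[OF cl that(2,1)] scope_subset_Lam[OF that(2)]
    by (metis subsetD)
  then have "apply (inverse p1) ` Lam t X - {a. (a, X) \<in> \<Delta>}
      = apply (inverse p2) ` Lam t X - {a. (a, X) \<in> \<Delta>}"
    using assms(2,3) unfolding mem_image_apply_inverse set_eq_iff Diff_iff mem_Collect_eq
    by blast
  then show ?thesis
    unfolding arg_atoms_def by simp
qed

lemma bvar_eq_map_pairs:
  "c \<in> set ys \<or> p \<langle>$\<rangle> c = q \<langle>$\<rangle> c \<Longrightarrow>
   bvar_eq (map (\<lambda>c. (p \<langle>$\<rangle> c, q \<langle>$\<rangle> c)) ys) (p \<langle>$\<rangle> c) (q \<langle>$\<rangle> c)"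
  by (induction ys) (auto simp: apply_inj)

lemma alpha_list_map:
  "(\<And>x. x \<in> set ts \<Longrightarrow> alpha env (f x) (g x)) \<Longrightarrow> alpha_list env (map f ts) (map g ts)"
  by (induction ts) auto

lemma alpha_trans_aux_perm_act:
  assumes "vars s = {}" and "\<forall>c\<in>fa s. bvar_eq env (p \<langle>$\<rangle> c) (q \<langle>$\<rangle> c)"
  shows "alpha env (trans_aux \<Delta> L1 (perm_act p s)) (trans_aux \<Delta> L2 (perm_act q s))"
  using assms
proof (induction s arbitrary: env)
  case (Abs a s)
  have "vars s = {}"
    using Abs.prems(1) by simp
  moreover have "\<forall>c\<in>fa s. bvar_eq ((p \<langle>$\<rangle> a, q \<langle>$\<rangle> a) # env) (p \<langle>$\<rangle> c) (q \<langle>$\<rangle> c)"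
    using Abs.prems(2) by (auto simp: apply_inj)
  ultimately have "alpha ((p \<langle>$\<rangle> a, q \<langle>$\<rangle> a) # env)
      (trans_aux \<Delta> L1 (perm_act p s)) (trans_aux \<Delta> L2 (perm_act q s))"
    by (rule Abs.IH)
  then show ?case by simp
next
  case (Tup ts)
  have "alpha env (trans_aux \<Delta> L1 (perm_act p s)) (trans_aux \<Delta> L2 (perm_act q s))"
    if "s \<in> set ts" for s
    using Tup.prems that by (intro Tup.IH) auto
  then have "alpha_list env (map (\<lambda>s. trans_aux \<Delta> L1 (perm_act p s)) ts)
      (map (\<lambda>s. trans_aux \<Delta> L2 (perm_act q s)) ts)"
    by (rule alpha_list_map)
  then show ?case by (simp add: comp_def)
qed simp_all

lemma alpha_substitute_map_map:
  "alpha_substitute (map (apply p) xs, s1) (map (apply q) xs, s2) \<longleftrightarrow>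
   alpha (map (\<lambda>c. (p \<langle>$\<rangle> c, q \<langle>$\<rangle> c)) (rev xs)) s1 s2"
  by (simp add: alpha_substitute_def zip_map_map zip_same_conv_map rev_map comp_def)

theorem mainTheorem10:
  fixes \<Delta> :: "('a::linorder, 'v) fctx"
    and t :: "('a, 'v, 'f) nterm"
    and \<sigma> :: "('a, 'v, 'f) nsubst"
    and X :: 'v and \<pi>i \<pi>j :: "'a perm" and Bi Bj :: "'a set"
  assumes "infinite (UNIV :: 'a set)"
    and cl: "closed \<Delta> t"
    and sat: "satisfies \<sigma> \<Delta>"
    and "dom \<sigma> \<subseteq> vars t"
    and gr: "ground (subst \<sigma> t)"
    and oi: "(Bi, \<pi>i, X) \<in> occs t"
    and oj: "(Bj, \<pi>j, X) \<in> occs t"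
  shows "alpha_substitute (subst_trans \<Delta> t \<sigma> X \<pi>i) (subst_trans \<Delta> t \<sigma> X \<pi>j)"
proof -
  obtain u where u: "\<sigma> X = Some u" and u_ground: "vars u = {}"
    using ground_subst_occs[OF gr oi] .
  define xs where "xs = arg_atoms \<Delta> (Lam t X) \<pi>i X"
  have xs_j: "arg_atoms \<Delta> (Lam t X) \<pi>j X = xs"
    unfolding xs_def using closed_arg_atoms_eq[OF cl oj oi] .
  have "c \<in> set (rev xs) \<or> \<pi>i \<langle>$\<rangle> c = \<pi>j \<langle>$\<rangle> c" if "c \<in> fa u" for c
  proof -
    have "(c, X) \<notin> \<Delta>" using satisfies_notin_fa[OF sat u] that by blast
    then have "\<pi>i \<langle>$\<rangle> c \<in> Bi \<or> \<pi>i \<langle>$\<rangle> c = \<pi>j \<langle>$\<rangle> c"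
      using closed_unabstracted_diff_fresh[OF cl oi oj] by blast
    with \<open>(c, X) \<notin> \<Delta>\<close> show ?thesis
      using scope_subset_Lam[OF oi] by (auto simp: xs_def set_arg_atoms_Lam)
  qed
  then have "alpha (map (\<lambda>c. (\<pi>i \<langle>$\<rangle> c, \<pi>j \<langle>$\<rangle> c)) (rev xs))
      (trans \<Delta> (perm_act \<pi>i u)) (trans \<Delta> (perm_act \<pi>j u))"
    unfolding trans_def by (intro alpha_trans_aux_perm_act u_ground ballI bvar_eq_map_pairs)
  then show ?thesis
    by (simp add: subst_trans_def u xs_j flip: xs_def alpha_substitute_map_map)
qed

end
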